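(* Let $i,h$ be receivers with $\psi_i>\psi_h\ge 1$ and $\varrho_i<\varrho_h$. Then $\mathbb E[\Delta_h]>\mathbb E[\Delta_i]$, where $\mathbb E[\Delta_r]$ denotes the expected primary degree of a vertex induced by receiver $r$.
   Context: A sender holds a frame $\mathcal N$ of $N\ge2$ packets and serves receivers $\mathcal M=\{1,\dots,M\}$. For each receiver $r$ there are sets $\mathcal H_r\subseteq\mathcal N$ (Has set), $\mathcal L_r=\mathcal N\setminus\mathcal H_r$ (Lacks set) and $\mathcal W_r\subseteq\mathcal L_r$ (Wants set), with cardinalities $\varrho_r=|\mathcal H_r|$, $\varphi_r=N-\varrho_r$, $\psi_r=|\mathcal W_r|$. The primary IDNC graph $\mathcal G_\rho$ has a vertex $v_{rj}$ for every receiver $r$ and every $j\in\mathcal W_r$; two distinct vertices $v_{rj},v_{kl}$ are adjacent iff (C1) $j=l$, or (C2) $j\in\mathcal H_k$ and $l\in\mathcal H_r$. The primary degree of a vertex is its degree in $\mathcal G_\rho$. Expectations are taken in the model that ignores set contents: given the cardinalities, the pairs $(\mathcal H_k,\mathcal W_k)$, $k\in\mathcal M$, are independent, $\mathcal H_k$ is a uniformly random $\varrho_k$-element subset of $\mathcal N$, and given $\mathcal H_k$, $\mathcal W_k$ is a uniformly random $\psi_k$-element subset of $\mathcal N\setminus\mathcal H_k$. For a receiver $r$ with $\psi_r\ge1$, $\mathbb E[\Delta_r]$ is the expected primary degree of $v_{rj}$ conditioned on $j\in\mathcal W_r$ (independent of the packet $j$). *)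

theory Defs
  imports "HOL-Probability.Probability"
begin

text \<open>Packets are 0..N-1, receivers are 1..M. A configuration assigns to each
receiver k a pair (Has set, Wants set). Cardinalities rho k and psi k are given.\<close>

definition packets :: "nat \<Rightarrow> nat set" where
  "packets N = {..<N}"

definition receivers :: "nat \<Rightarrow> nat set" where
  "receivers M = {1..M}"

definition rx_choices :: "nat \<Rightarrow> (nat \<Rightarrow> nat) \<Rightarrow> (nat \<Rightarrow> nat) \<Rightarrow> nat \<Rightarrow> (nat set \<times> nat set) set" where
  "rx_choices N rho psi k =
     {(H, W). H \<subseteq> packets N \<and> card H = rho k \<and> W \<subseteq> packets N - H \<and> card W = psi k}"

text \<open>All configurations; under the model (independent receivers, H uniform, W uniform
given H) the product distribution is uniform on this finite set.\<close>
definition configs :: "nat \<Rightarrow> nat \<Rightarrow> (nat \<Rightarrow> nat) \<Rightarrow> (nat \<Rightarrow> nat)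
    \<Rightarrow> (nat \<Rightarrow> nat set \<times> nat set) set" where
  "configs N M rho psi = PiE (receivers M) (rx_choices N rho psi)"

definition Has :: "(nat \<Rightarrow> nat set \<times> nat set) \<Rightarrow> nat \<Rightarrow> nat set" where
  "Has c k = fst (c k)"

definition Wants :: "(nat \<Rightarrow> nat set \<times> nat set) \<Rightarrow> nat \<Rightarrow> nat set" where
  "Wants c k = snd (c k)"

definition idnc_vertices :: "nat \<Rightarrow> (nat \<Rightarrow> nat set \<times> nat set) \<Rightarrow> (nat \<times> nat) set" where
  "idnc_vertices M c = {(k, l). k \<in> receivers M \<and> l \<in> Wants c k}"

text \<open>Adjacency: distinct vertices with (C1) same packet or (C2) j in H_k and l in H_r.\<close>
definition idnc_adj :: "(nat \<Rightarrow> nat set \<times> nat set) \<Rightarrow> nat \<times> nat \<Rightarrow> nat \<times> nat \<Rightarrow> bool" where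
  "idnc_adj c v u = (case v of (r, j) \<Rightarrow> case u of (k, l) \<Rightarrow>
      (r, j) \<noteq> (k, l) \<and> (j = l \<or> (j \<in> Has c k \<and> l \<in> Has c r)))"

definition primary_degree :: "nat \<Rightarrow> (nat \<Rightarrow> nat set \<times> nat set) \<Rightarrow> nat \<times> nat \<Rightarrow> nat" where
  "primary_degree M c v = card {u \<in> idnc_vertices M c. idnc_adj c v u}"

definition expected_degree :: "nat \<Rightarrow> nat \<Rightarrow> (nat \<Rightarrow> nat) \<Rightarrow> (nat \<Rightarrow> nat) \<Rightarrow> nat \<Rightarrow> nat \<Rightarrow> real" where
  "expected_degree N M rho psi r j =
     measure_pmf.expectation (pmf_of_set {c \<in> configs N M rho psi. j \<in> Wants c r})
       (\<lambda>c. real (primary_degree M c (r, j)))"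

end

(*
  Conditioned on j in W_r, the (Has, Wants) pairs of the receivers are still independent and
  uniform; only the pair of receiver r is restricted to those with j in W_r. Receiver r itself
  contributes no neighbour of v_rj, while a receiver k <> r contributes [j in W_k] by (C1) and,
  when j in H_k, the number of packets in H_r that lie in W_k by (C2). The uniform model is
  invariant under permutations of the packets, so double counting gives P(j in W_k) = psi_k/N
  and P(j in H_k, l in W_k) = rho_k psi_k/(N(N-1)) for every l <> j. Summing over l in H_r,
    E[Delta_r] = sum over k <> r of  psi_k/N + rho_r rho_k psi_k/(N(N-1)).
  In the sums for h and i the terms of the receivers k <> h, i grow with rho_r, and the two
  remaining terms compare as psi_h/N + c psi_h < psi_i/N + c psi_i with c = rho_h rho_i/(N(N-1)).
*)
theory Submission
  imports Defs
begin

section \<open>Double counting under a symmetry\<close>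

lemma sum_card_filter_mem:
  assumes "finite S" "finite F" "\<And>y. y \<in> F \<Longrightarrow> f y \<subseteq> S"
  shows "(\<Sum>p\<in>S. card {y\<in>F. p \<in> f y}) = (\<Sum>y\<in>F. card (f y))"
proof -
  have "(\<Sum>p\<in>S. card {y\<in>F. p \<in> f y}) = (\<Sum>p\<in>S. \<Sum>y\<in>F. of_bool (p \<in> f y))"
    using assms(2) by (simp add: Int_def conj_commute)
  also have "\<dots> = (\<Sum>y\<in>F. \<Sum>p\<in>S. of_bool (p \<in> f y))"
    by (rule sum.swap)
  also have "\<dots> = (\<Sum>y\<in>F. card (f y))"
    using assms by (intro sum.cong) (auto simp: Int_absorb1 Int_def[symmetric])
  finally show ?thesis .
qed

lemma card_filter_mem_uniform:
  assumes "finite S" "finite F" "\<And>y. y \<in> F \<Longrightarrow> f y \<subseteq> S \<and> card (f y) = b" "p \<in> S"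
    and uniform: "\<And>q. q \<in> S \<Longrightarrow> card {y\<in>F. q \<in> f y} = card {y\<in>F. p \<in> f y}"
  shows "card S * card {y\<in>F. p \<in> f y} = b * card F"
proof -
  have "card S * card {y\<in>F. p \<in> f y} = (\<Sum>q\<in>S. card {y\<in>F. q \<in> f y})"
    using uniform by simp
  also have "\<dots> = (\<Sum>y\<in>F. card (f y))"
    using assms by (intro sum_card_filter_mem) auto
  also have "\<dots> = b * card F"
    using assms(3) by simp
  finally show ?thesis .
qed

lemma card_filter_involution:
  assumes "g ` F \<subseteq> F" "\<And>y. y \<in> F \<Longrightarrow> g (g y) = y"
  shows "card {y\<in>F. P (g y)} = card {y\<in>F. P y}"
  by (rule bij_betw_same_card[of g], rule bij_betw_byWitness[of _ g]) (use assms in auto)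

lemma two_le_card: "finite S \<Longrightarrow> j \<in> S \<Longrightarrow> l \<in> S - {j} \<Longrightarrow> 2 \<le> card S"
  using card_mono[of S "{j, l}"] by auto

lemma sum_remove_swap_less:
  fixes f g :: "'a \<Rightarrow> 'b::ordered_cancel_comm_monoid_add"
  assumes "finite R" "h \<in> R" "i \<in> R" "h \<noteq> i"
    and "g h < f i" "\<And>k. g k \<le> f k"
  shows "(\<Sum>k\<in>R - {i}. g k) < (\<Sum>k\<in>R - {h}. f k)"
proof -
  let ?T = "R - {h} - {i}"
  have "(\<Sum>k\<in>R - {i}. g k) = g h + (\<Sum>k\<in>R - {i} - {h}. g k)"
    using assms(1-4) by (intro sum.remove) auto
  also have "R - {i} - {h} = ?T"
    by blast
  finally have g_split: "(\<Sum>k\<in>R - {i}. g k) = g h + (\<Sum>k\<in>?T. g k)" .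
  have f_split: "(\<Sum>k\<in>R - {h}. f k) = f i + (\<Sum>k\<in>?T. f k)"
    using assms(1-4) by (intro sum.remove) auto
  have "(\<Sum>k\<in>?T. g k) \<le> (\<Sum>k\<in>?T. f k)"
    using assms(6) by (rule sum_mono)
  then show ?thesis
    unfolding g_split f_split by (intro add_less_le_mono assms(5))
qed

section \<open>Expectations under products of pmfs\<close>

lemma expectation_pmf_of_set_of_bool:
  assumes "finite A" "A \<noteq> {}"
  shows "measure_pmf.expectation (pmf_of_set A) (\<lambda>x. of_bool (P x)) = card {x\<in>A. P x} / card A"
  using assms by (simp add: integral_pmf_of_set Int_def)

lemma expectation_Pi_pmf_component:
  fixes f :: "'b \<Rightarrow> real"
  assumes "finite A" "k \<in> A"
  shows "measure_pmf.expectation (Pi_pmf A d p) (\<lambda>c. f (c k)) = measure_pmf.expectation (p k) f"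
proof -
  have "p k = map_pmf (\<lambda>c. c k) (Pi_pmf A d p)"
    using Pi_pmf_component[OF assms(1), of k d p] assms(2) by simp
  then show ?thesis
    by simp
qed

lemma expectation_Pi_pmf_mult_components:
  fixes f g :: "'b \<Rightarrow> real"
  assumes "finite A" "r \<in> A" "k \<in> A" "r \<noteq> k"
    and "\<And>m. m \<in> A \<Longrightarrow> finite (set_pmf (p m))"
    and "\<And>x. f x \<ge> 0" "\<And>y. g y \<ge> 0"
  shows "measure_pmf.expectation (Pi_pmf A d p) (\<lambda>c. f (c r) * g (c k))
           = measure_pmf.expectation (p r) f * measure_pmf.expectation (p k) g"
proof -
  define F where "F m = (if m = r then f else if m = k then g else (\<lambda>_. 1))" for m
  have prod_F: "(\<Prod>m\<in>A. h m) = h r * h k" if "\<And>m. m \<in> A - {r, k} \<Longrightarrow> h m = 1" for h :: "'a \<Rightarrow> real"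
  proof -
    have "(\<Prod>m\<in>A. h m) = h r * (h k * (\<Prod>m\<in>A - {r} - {k}. h m))"
      using assms(1-4) by (simp add: prod.remove)
    also have "(\<Prod>m\<in>A - {r} - {k}. h m) = 1"
      using that by (intro prod.neutral) auto
    finally show ?thesis by simp
  qed
  have "(\<lambda>c. f (c r) * g (c k)) = (\<lambda>c. \<Prod>m\<in>A. F m (c m))"
    using assms(4) by (intro ext, subst prod_F) (auto simp: F_def)
  then have "measure_pmf.expectation (Pi_pmf A d p) (\<lambda>c. f (c r) * g (c k))
      = measure_pmf.expectation (Pi_pmf A d p) (\<lambda>c. \<Prod>m\<in>A. F m (c m))"
    by simp
  also have "\<dots> = (\<Prod>m\<in>A. measure_pmf.expectation (p m) (F m))"
    using assms by (intro expectation_prod_Pi_pmf integrable_measure_pmf_finite) (auto simp: F_def)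
  also have "\<dots> = measure_pmf.expectation (p r) f * measure_pmf.expectation (p k) g"
    using assms(4) by (subst prod_F) (auto simp: F_def)
  finally show ?thesis .
qed

section \<open>Uniformly random Has and Wants sets\<close>

definition hw_pairs :: "'a set \<Rightarrow> nat \<Rightarrow> nat \<Rightarrow> ('a set \<times> 'a set) set" where
  "hw_pairs S a b = {(H, W). H \<subseteq> S \<and> card H = a \<and> W \<subseteq> S - H \<and> card W = b}"

lemma rx_choices_eq_hw_pairs: "rx_choices N rho psi k = hw_pairs (packets N) (rho k) (psi k)"
  by (simp add: rx_choices_def hw_pairs_def)

lemma finite_hw_pairs: "finite S \<Longrightarrow> finite (hw_pairs S a b)"
  by (rule finite_subset[of _ "Pow S \<times> Pow S"]) (auto simp: hw_pairs_def)

lemma hw_pairs_nonempty: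
  assumes "finite S" "a + b \<le> card S"
  shows "hw_pairs S a b \<noteq> {}"
proof -
  obtain H where H: "H \<subseteq> S" "card H = a"
    using obtain_subset_with_card_n[of a S] assms(2) by auto
  moreover have "b \<le> card (S - H)"
    using H assms by (simp add: card_Diff_subset finite_subset)
  then obtain W where "W \<subseteq> S - H" "card W = b"
    using obtain_subset_with_card_n by metis
  ultimately show ?thesis by (auto simp: hw_pairs_def)
qed

lemma hw_pairs_memD:
  assumes "y \<in> hw_pairs S a b"
  shows "fst y \<subseteq> S" "card (fst y) = a" "snd y \<subseteq> S - fst y" "card (snd y) = b"
  using assms by (auto simp: hw_pairs_def)

lemma hw_pairs_permute:
  assumes "\<sigma> permutes S" "(H, W) \<in> hw_pairs S a b"
  shows "(\<sigma> ` H, \<sigma> ` W) \<in> hw_pairs S a b"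
proof -
  have inj: "inj \<sigma>" using assms(1) by (rule permutes_inj)
  have "\<sigma> ` H \<subseteq> S" "\<sigma> ` W \<subseteq> S - \<sigma> ` H"
    using assms inj permutes_image[OF assms(1)] by (auto simp: hw_pairs_def inj_eq)
  then show ?thesis
    using assms(2) inj by (auto simp: hw_pairs_def card_image inj_on_subset)
qed

lemma card_hw_pairs_filter_transpose:
  assumes "p \<in> S" "q \<in> S"
  shows "card {y\<in>hw_pairs S a b. Q (map_prod ((`) (Transposition.transpose p q)) ((`) (Transposition.transpose p q)) y)}
       = card {y\<in>hw_pairs S a b. Q y}"
  by (rule card_filter_involution)
     (auto simp: image_image intro: hw_pairs_permute[OF permutes_swap_id[OF assms]])

lemma card_hw_pairs_mem:
  assumes "finite S" "j \<in> S"
  shows "card S * card {y\<in>hw_pairs S a b. j \<in> snd y} = b * card (hw_pairs S a b)"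
    and "card S * card {y\<in>hw_pairs S a b. j \<in> fst y} = a * card (hw_pairs S a b)"
proof -
  have "card {y\<in>hw_pairs S a b. q \<in> snd y} = card {y\<in>hw_pairs S a b. j \<in> snd y}"
    and "card {y\<in>hw_pairs S a b. q \<in> fst y} = card {y\<in>hw_pairs S a b. j \<in> fst y}"
    if "q \<in> S" for q
    using card_hw_pairs_filter_transpose[OF that assms(2), of a b "\<lambda>y. j \<in> snd y"]
      card_hw_pairs_filter_transpose[OF that assms(2), of a b "\<lambda>y. j \<in> fst y"]
    by (simp_all add: in_transpose_image_iff)
  then show "card S * card {y\<in>hw_pairs S a b. j \<in> snd y} = b * card (hw_pairs S a b)"
    and "card S * card {y\<in>hw_pairs S a b. j \<in> fst y} = a * card (hw_pairs S a b)"
    by (intro card_filter_mem_uniform assms finite_hw_pairs; auto dest: hw_pairs_memD)+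
qed

lemma card_hw_pairs_has_wants:
  assumes "finite S" "j \<in> S" "l \<in> S - {j}"
  shows "(card S - 1) * card {y\<in>hw_pairs S a b. j \<in> fst y \<and> l \<in> snd y}
           = b * card {y\<in>hw_pairs S a b. j \<in> fst y}"
proof -
  let ?H = "{y\<in>hw_pairs S a b. j \<in> fst y}"
  have filter_H: "{y\<in>?H. q \<in> snd y} = {y\<in>hw_pairs S a b. j \<in> fst y \<and> q \<in> snd y}" for q
    by auto
  have uniform: "card {y\<in>?H. q \<in> snd y} = card {y\<in>?H. l \<in> snd y}" if "q \<in> S - {j}" for q
  proof -
    have "Transposition.transpose q l j = j"
      using that assms by (metis DiffE insertI1 transpose_apply_other)
    then show ?thesis
      unfolding filter_H
      using card_hw_pairs_filter_transpose[of q S l a b "\<lambda>y. j \<in> fst y \<and> l \<in> snd y"] that assms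
      by (simp add: in_transpose_image_iff)
  qed
  have "card (S - {j}) * card {y\<in>?H. l \<in> snd y} = b * card ?H"
  proof (rule card_filter_mem_uniform[OF _ _ _ assms(3) uniform])
    show "snd y \<subseteq> S - {j} \<and> card (snd y) = b" if "y \<in> ?H" for y
      using that hw_pairs_memD[of y S a b] by blast
  qed (use assms(1) finite_hw_pairs[OF assms(1)] in simp_all)
  then show ?thesis
    using assms by (simp add: filter_H)
qed

lemma hw_pairs_wants_nonempty:
  assumes "finite S" "j \<in> S" "b \<ge> 1" "a + b \<le> card S"
  shows "{y\<in>hw_pairs S a b. j \<in> snd y} \<noteq> {}"
proof -
  have "card (hw_pairs S a b) \<noteq> 0"
    using hw_pairs_nonempty[OF assms(1,4)] finite_hw_pairs[OF assms(1)] by simp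
  then have "card S * card {y\<in>hw_pairs S a b. j \<in> snd y} \<noteq> 0"
    using card_hw_pairs_mem(1)[OF assms(1,2)] assms(3) by simp
  then show ?thesis
    by (metis card.empty mult_0_right)
qed

lemma expectation_hw_pairs_wants:
  assumes "finite S" "j \<in> S" "hw_pairs S a b \<noteq> {}"
  shows "measure_pmf.expectation (pmf_of_set (hw_pairs S a b)) (\<lambda>y. of_bool (j \<in> snd y))
           = b / card S"
proof -
  let ?P = "hw_pairs S a b"
  have count: "real (card S) * card {y\<in>?P. j \<in> snd y} = b * card ?P"
    using card_hw_pairs_mem(1)[OF assms(1,2), of a b] by (simp flip: of_nat_mult)
  have "card S \<noteq> 0" "card ?P \<noteq> 0"
    using assms finite_hw_pairs[OF assms(1)] by auto
  then have "card {y\<in>?P. j \<in> snd y} / real (card ?P) = b / card S"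
    using count by (simp add: divide_eq_eq eq_divide_eq mult.commute)
  then show ?thesis
    using assms(3) finite_hw_pairs[OF assms(1)] by (simp add: expectation_pmf_of_set_of_bool)
qed

lemma expectation_hw_pairs_has_and_wants:
  assumes "finite S" "j \<in> S" "l \<in> S - {j}" "hw_pairs S a b \<noteq> {}"
  shows "measure_pmf.expectation (pmf_of_set (hw_pairs S a b)) (\<lambda>y. of_bool (j \<in> fst y \<and> l \<in> snd y))
           = a * b / (card S * (real (card S) - 1))"
proof -
  let ?P = "hw_pairs S a b"
  have "card S \<ge> 2"
    using two_le_card[OF assms(1-3)] .
  then have "real (card S - 1) = real (card S) - 1"
    by (simp add: of_nat_diff)
  then have count_has_wants:
      "(real (card S) - 1) * card {y\<in>?P. j \<in> fst y \<and> l \<in> snd y} = b * card {y\<in>?P. j \<in> fst y}"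
    using arg_cong[OF card_hw_pairs_has_wants[OF assms(1-3), of a b], of real]
    unfolding of_nat_mult by simp
  have count_has: "real (card S) * card {y\<in>?P. j \<in> fst y} = a * card ?P"
    using card_hw_pairs_mem(2)[OF assms(1,2), of a b] by (simp flip: of_nat_mult)
  have "card S * (real (card S) - 1) * card {y\<in>?P. j \<in> fst y \<and> l \<in> snd y}
      = b * (real (card S) * card {y\<in>?P. j \<in> fst y})"
    by (simp only: mult.assoc count_has_wants of_nat_mult mult.left_commute[of "real (card S)"])
  also have "\<dots> = a * b * card ?P"
    by (simp only: count_has of_nat_mult mult_ac)
  finally have count: "card S * (real (card S) - 1) * card {y\<in>?P. j \<in> fst y \<and> l \<in> snd y} = a * b * card ?P" .
  have "card S * (real (card S) - 1) \<noteq> 0" "card ?P \<noteq> 0"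
    using \<open>card S \<ge> 2\<close> assms(4) finite_hw_pairs[OF assms(1)] by auto
  then have "card {y\<in>?P. j \<in> fst y \<and> l \<in> snd y} / real (card ?P) = a * b / (card S * (real (card S) - 1))"
    using count by (simp add: frac_eq_eq mult.commute)
  then show ?thesis
    using assms(4) finite_hw_pairs[OF assms(1)] by (simp add: expectation_pmf_of_set_of_bool)
qed

section \<open>Neighbours of a vertex\<close>

(* For x = (H_r, W_r) and y = (H_k, W_k): the number of vertices v_kl adjacent to v_rj. *)
definition adj_count :: "'a \<Rightarrow> 'a set \<times> 'a set \<Rightarrow> 'a set \<times> 'a set \<Rightarrow> nat" where
  "adj_count j x y = card {l \<in> snd y. l = j \<or> (j \<in> fst y \<and> l \<in> fst x)}"

lemma adj_count_eq_sum:
  assumes "finite S" "y \<in> hw_pairs S a b"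
  shows "real (adj_count j x y)
           = of_bool (j \<in> snd y) + (\<Sum>l\<in>S - {j}. of_bool (l \<in> fst x) * of_bool (j \<in> fst y \<and> l \<in> snd y))"
proof (cases "j \<in> fst y")
  case True
  then have "{l \<in> snd y. l = j \<or> (j \<in> fst y \<and> l \<in> fst x)} = (S - {j}) \<inter> {l. l \<in> fst x \<and> l \<in> snd y}"
    using hw_pairs_memD[OF assms(2)] by auto
  moreover have "j \<notin> snd y"
    using True hw_pairs_memD[OF assms(2)] by auto
  ultimately show ?thesis
    using True assms(1) by (simp add: adj_count_def flip: of_bool_conj)
next
  case False
  then have "{l \<in> snd y. l = j \<or> (j \<in> fst y \<and> l \<in> fst x)} = snd y \<inter> {j}"
    by auto
  then show ?thesis
    using False by (simp add: adj_count_def)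
qed

lemma sum_of_bool_mem_fst_hw_pairs:
  assumes "finite S" "x \<in> hw_pairs S a b" "j \<in> snd x"
  shows "(\<Sum>l\<in>S - {j}. of_bool (l \<in> fst x)) = real a"
proof -
  have "(S - {j}) \<inter> fst x = fst x"
    using assms(3) hw_pairs_memD[OF assms(2)] by blast
  then show ?thesis
    using assms(1) hw_pairs_memD(2)[OF assms(2)] by simp
qed

lemma expectation_adj_count_eq_sum:
  assumes "finite S" "finite A" "k \<in> A" "\<And>m. m \<in> A \<Longrightarrow> finite (set_pmf (p m))"
    and "set_pmf (p k) \<subseteq> hw_pairs S a b"
  shows "measure_pmf.expectation (Pi_pmf A d p) (\<lambda>c. real (adj_count j (c r) (c k)))
           = measure_pmf.expectation (Pi_pmf A d p) (\<lambda>c. of_bool (j \<in> snd (c k)))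
           + (\<Sum>l\<in>S - {j}. measure_pmf.expectation (Pi_pmf A d p)
                (\<lambda>c. of_bool (l \<in> fst (c r)) * of_bool (j \<in> fst (c k) \<and> l \<in> snd (c k))))"
proof -
  let ?D = "Pi_pmf A d p"
  have "c k \<in> hw_pairs S a b" if "c \<in> set_pmf ?D" for c
    using that assms(2,3,5) by (auto simp: set_Pi_pmf PiE_dflt_def)
  then have "measure_pmf.expectation ?D (\<lambda>c. real (adj_count j (c r) (c k)))
      = measure_pmf.expectation ?D (\<lambda>c. of_bool (j \<in> snd (c k))
          + (\<Sum>l\<in>S - {j}. of_bool (l \<in> fst (c r)) * of_bool (j \<in> fst (c k) \<and> l \<in> snd (c k))))"
    by (intro integral_cong_AE AE_pmfI adj_count_eq_sum[OF assms(1)]) simp_all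
  moreover have "finite (set_pmf ?D)"
    using assms(2,4) by (auto simp: set_Pi_pmf o_def)
  ultimately show ?thesis
    by (simp add: integrable_measure_pmf_finite)
qed

lemma expectation_adj_count:
  assumes "finite S" "j \<in> S" "finite A" "r \<in> A" "k \<in> A" "r \<noteq> k"
    and fin: "\<And>m. m \<in> A \<Longrightarrow> finite (set_pmf (p m))"
    and p_r: "set_pmf (p r) \<subseteq> {x\<in>hw_pairs S a' b'. j \<in> snd x}"
    and p_k: "p k = pmf_of_set (hw_pairs S a b)" "hw_pairs S a b \<noteq> {}"
  shows "measure_pmf.expectation (Pi_pmf A d p) (\<lambda>c. real (adj_count j (c r) (c k)))
           = b / card S + real a' * a * b / (card S * (real (card S) - 1))"
proof -
  let ?D = "Pi_pmf A d p" and ?q = "a * b / (card S * (real (card S) - 1))"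
  have "set_pmf (p k) = hw_pairs S a b"
    using p_k finite_hw_pairs[OF assms(1)] by simp
  then have "measure_pmf.expectation ?D (\<lambda>c. real (adj_count j (c r) (c k)))
      = measure_pmf.expectation ?D (\<lambda>c. of_bool (j \<in> snd (c k)))
      + (\<Sum>l\<in>S - {j}. measure_pmf.expectation ?D
          (\<lambda>c. of_bool (l \<in> fst (c r)) * of_bool (j \<in> fst (c k) \<and> l \<in> snd (c k))))"
    using assms(1,3,5) fin by (intro expectation_adj_count_eq_sum) auto
  also have "\<dots> = b / card S + (\<Sum>l\<in>S - {j}. measure_pmf.expectation (p r) (\<lambda>x. of_bool (l \<in> fst x)) * ?q)"
  proof -
    have "measure_pmf.expectation ?D (\<lambda>c. of_bool (j \<in> snd (c k))) = b / card S"
      using expectation_Pi_pmf_component[OF assms(3,5), where f = "\<lambda>y. of_bool (j \<in> snd y)" and d = d]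
        expectation_hw_pairs_wants[OF assms(1,2) p_k(2)]
      by (simp add: p_k(1))
    moreover have "measure_pmf.expectation ?D
          (\<lambda>c. of_bool (l \<in> fst (c r)) * of_bool (j \<in> fst (c k) \<and> l \<in> snd (c k)))
        = measure_pmf.expectation (p r) (\<lambda>x. of_bool (l \<in> fst x)) * ?q" if "l \<in> S - {j}" for l
      using expectation_Pi_pmf_mult_components[OF assms(3-6) fin,
          where f = "\<lambda>x. of_bool (l \<in> fst x)" and g = "\<lambda>y. of_bool (j \<in> fst y \<and> l \<in> snd y)"
          and d = d]
        expectation_hw_pairs_has_and_wants[OF assms(1,2) that p_k(2)]
      by (simp add: p_k(1))
    ultimately show ?thesis
      by simp
  qed
  also have "\<dots> = b / card S + measure_pmf.expectation (p r) (\<lambda>x. \<Sum>l\<in>S - {j}. of_bool (l \<in> fst x)) * ?q"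
  proof -
    have "measure_pmf.expectation (p r) (\<lambda>x. \<Sum>l\<in>S - {j}. of_bool (l \<in> fst x) :: real)
        = (\<Sum>l\<in>S - {j}. measure_pmf.expectation (p r) (\<lambda>x. of_bool (l \<in> fst x)))"
      using fin[OF assms(4)] by (simp add: integrable_measure_pmf_finite)
    then show ?thesis
      by (simp only: sum_distrib_right)
  qed
  also have "measure_pmf.expectation (p r) (\<lambda>x. \<Sum>l\<in>S - {j}. of_bool (l \<in> fst x)) = real a'"
  proof -
    have "(\<Sum>l\<in>S - {j}. of_bool (l \<in> fst x)) = real a'" if "x \<in> set_pmf (p r)" for x
      using p_r that sum_of_bool_mem_fst_hw_pairs[OF assms(1)] by blast
    then show ?thesis
      by (simp add: integral_cong_AE[OF _ _ AE_pmfI, where g = "\<lambda>_. real a'"])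
  qed
  finally show ?thesis
    by simp
qed

section \<open>The expected primary degree\<close>

lemma configs_hw_pairs:
  "c \<in> configs N M rho psi \<Longrightarrow> k \<in> receivers M \<Longrightarrow> c k \<in> hw_pairs (packets N) (rho k) (psi k)"
  by (auto simp: configs_def rx_choices_eq_hw_pairs PiE_iff)

lemma primary_degree_eq_sum_adj_count:
  assumes c: "c \<in> configs N M rho psi" and r: "r \<in> receivers M" and j: "j \<in> Wants c r"
  shows "primary_degree M c (r, j) = (\<Sum>k\<in>receivers M - {r}. adj_count j (c r) (c k))"
proof -
  have "j \<notin> Has c r"
    using configs_hw_pairs[OF c r] j by (auto simp: hw_pairs_def Has_def Wants_def)
  then have "{u \<in> idnc_vertices M c. idnc_adj c (r, j) u}
      = Sigma (receivers M - {r}) (\<lambda>k. {l \<in> snd (c k). l = j \<or> (j \<in> fst (c k) \<and> l \<in> fst (c r))})"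
    by (auto simp: idnc_vertices_def idnc_adj_def Has_def Wants_def)
  moreover have "finite (snd (c k))" if "k \<in> receivers M" for k
    using hw_pairs_memD(3)[OF configs_hw_pairs[OF c that]] finite_subset by (auto simp: packets_def)
  ultimately show ?thesis
    by (simp add: primary_degree_def card_SigmaI adj_count_def receivers_def)
qed

definition rx_choices_given_wants ::
    "nat \<Rightarrow> (nat \<Rightarrow> nat) \<Rightarrow> (nat \<Rightarrow> nat) \<Rightarrow> nat \<Rightarrow> nat \<Rightarrow> nat \<Rightarrow> (nat set \<times> nat set) set" where
  "rx_choices_given_wants N rho psi r j k =
     (if k = r then {y\<in>hw_pairs (packets N) (rho r) (psi r). j \<in> snd y}
      else hw_pairs (packets N) (rho k) (psi k))"

lemma rx_choices_given_wants_finite_nonempty: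
  assumes "\<forall>k\<in>receivers M. rho k + psi k \<le> N"
    and "r \<in> receivers M" "psi r \<ge> 1" "j \<in> packets N" "k \<in> receivers M"
  shows "finite (rx_choices_given_wants N rho psi r j k) \<and> rx_choices_given_wants N rho psi r j k \<noteq> {}"
proof -
  have "finite (packets N)" "card (packets N) = N" "rho k + psi k \<le> N" "rho r + psi r \<le> N"
    using assms(1,2,5) by (simp_all add: packets_def)
  then show ?thesis
    using hw_pairs_wants_nonempty[of "packets N" j "psi r" "rho r"] hw_pairs_nonempty[of "packets N" "rho k" "psi k"]
      finite_hw_pairs[of "packets N"] assms(3,4) by (auto simp: rx_choices_given_wants_def)
qed

lemma configs_given_wants_eq_PiE:
  "r \<in> receivers M \<Longrightarrow>
     {c\<in>configs N M rho psi. j \<in> Wants c r} = PiE (receivers M) (rx_choices_given_wants N rho psi r j)"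
  by (auto simp: configs_def rx_choices_eq_hw_pairs rx_choices_given_wants_def Wants_def PiE_iff
      extensional_def split: if_splits)

lemma pmf_of_set_configs_given_wants:
  assumes "\<forall>k\<in>receivers M. rho k + psi k \<le> N"
    and "r \<in> receivers M" "psi r \<ge> 1" "j \<in> packets N"
  shows "pmf_of_set {c\<in>configs N M rho psi. j \<in> Wants c r}
           = Pi_pmf (receivers M) undefined (\<lambda>k. pmf_of_set (rx_choices_given_wants N rho psi r j k))"
proof -
  have "PiE_dflt (receivers M) undefined (rx_choices_given_wants N rho psi r j)
      = PiE (receivers M) (rx_choices_given_wants N rho psi r j)"
    by (auto simp: PiE_dflt_def PiE_iff extensional_def)
  moreover have "finite (receivers M)"
    by (simp add: receivers_def)
  ultimately show ?thesis
    using assms rx_choices_given_wants_finite_nonempty[OF assms(1-4)]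
    by (simp add: Pi_pmf_of_set configs_given_wants_eq_PiE)
qed

definition expected_adj_count :: "nat \<Rightarrow> (nat \<Rightarrow> nat) \<Rightarrow> (nat \<Rightarrow> nat) \<Rightarrow> nat \<Rightarrow> nat \<Rightarrow> real" where
  "expected_adj_count N rho psi r k = psi k / N + real (rho r) * rho k * psi k / (N * (real N - 1))"

lemma expectation_adj_count_given_wants:
  assumes adm: "\<forall>k\<in>receivers M. rho k + psi k \<le> N"
    and r: "r \<in> receivers M" "psi r \<ge> 1" and j: "j \<in> packets N" and k: "k \<in> receivers M - {r}"
  shows "measure_pmf.expectation
           (Pi_pmf (receivers M) undefined (\<lambda>m. pmf_of_set (rx_choices_given_wants N rho psi r j m)))
           (\<lambda>c. real (adj_count j (c r) (c k)))
         = expected_adj_count N rho psi r k"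
proof -
  let ?B = "rx_choices_given_wants N rho psi r j"
  have B: "finite (?B m) \<and> ?B m \<noteq> {}" if "m \<in> receivers M" for m
    using rx_choices_given_wants_finite_nonempty[OF adm r j that] .
  have B_r: "?B r = {y\<in>hw_pairs (packets N) (rho r) (psi r). j \<in> snd y}"
    and B_k: "?B k = hw_pairs (packets N) (rho k) (psi k)"
    using k by (simp_all add: rx_choices_given_wants_def)
  have "measure_pmf.expectation (Pi_pmf (receivers M) undefined (\<lambda>m. pmf_of_set (?B m)))
          (\<lambda>c. real (adj_count j (c r) (c k)))
      = psi k / card (packets N)
        + real (rho r) * rho k * psi k / (card (packets N) * (real (card (packets N)) - 1))"
  proof (rule expectation_adj_count)
    show "set_pmf (pmf_of_set (?B r)) \<subseteq> {y\<in>hw_pairs (packets N) (rho r) (psi r). j \<in> snd y}"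
      using B_r B[OF r(1)] by simp
    show "pmf_of_set (?B k) = pmf_of_set (hw_pairs (packets N) (rho k) (psi k))"
      "hw_pairs (packets N) (rho k) (psi k) \<noteq> {}"
      using B_k B[of k] k by simp_all
  qed (use B k r j in \<open>simp_all add: packets_def receivers_def\<close>)
  then show ?thesis
    by (simp add: expected_adj_count_def packets_def)
qed

lemma expected_degree_eq:
  assumes adm: "\<forall>k\<in>receivers M. rho k + psi k \<le> N"
    and r: "r \<in> receivers M" "psi r \<ge> 1" and j: "j \<in> packets N"
  shows "expected_degree N M rho psi r j = (\<Sum>k\<in>receivers M - {r}. expected_adj_count N rho psi r k)"
proof -
  let ?S = "{c\<in>configs N M rho psi. j \<in> Wants c r}"
  have "finite ?S" "?S \<noteq> {}"
    unfolding configs_given_wants_eq_PiE[OF r(1)]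
    using rx_choices_given_wants_finite_nonempty[OF adm r j]
    by (auto intro!: finite_PiE simp: PiE_eq_empty_iff receivers_def)
  then have "expected_degree N M rho psi r j = measure_pmf.expectation (pmf_of_set ?S)
               (\<lambda>c. \<Sum>k\<in>receivers M - {r}. real (adj_count j (c r) (c k)))"
    unfolding expected_degree_def
    by (intro integral_cong_AE AE_pmfI) (auto simp: primary_degree_eq_sum_adj_count[OF _ r(1)])
  also have "\<dots> = (\<Sum>k\<in>receivers M - {r}.
      measure_pmf.expectation (pmf_of_set ?S) (\<lambda>c. real (adj_count j (c r) (c k))))"
    using \<open>finite ?S\<close> \<open>?S \<noteq> {}\<close> by (simp add: integrable_measure_pmf_finite)
  also have "\<dots> = (\<Sum>k\<in>receivers M - {r}. expected_adj_count N rho psi r k)"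
    by (intro sum.cong refl)
       (simp add: pmf_of_set_configs_given_wants[OF adm r j] expectation_adj_count_given_wants[OF adm r j])
  finally show ?thesis .
qed

lemma expected_adj_count_mono:
  assumes "N \<ge> 2" "rho i \<le> rho h"
  shows "expected_adj_count N rho psi i k \<le> expected_adj_count N rho psi h k"
proof -
  have "real (rho i) * rho k * psi k \<le> real (rho h) * rho k * psi k"
    using assms(2) by (intro mult_right_mono) auto
  moreover have "real N * (real N - 1) > 0"
    using assms(1) by simp
  ultimately show ?thesis
    by (simp add: expected_adj_count_def divide_right_mono)
qed

lemma expected_adj_count_swap_less:
  assumes "N \<ge> 2" "psi h < psi i"
  shows "expected_adj_count N rho psi i h < expected_adj_count N rho psi h i"
proof -
  have "psi h / N < psi i / N"
    using assms by (simp add: divide_strict_right_mono)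
  moreover have "real (rho i) * rho h * psi h \<le> real (rho h) * rho i * psi i"
    using assms(2) mult_left_mono[of "psi h" "psi i" "real (rho h) * rho i"] by (simp add: ac_simps)
  moreover have "real N * (real N - 1) > 0"
    using assms(1) by simp
  ultimately show ?thesis
    by (simp add: expected_adj_count_def add_less_le_mono divide_right_mono)
qed

theorem theorem2:
  fixes N M :: nat and rho psi :: "nat \<Rightarrow> nat" and i h j j' :: nat
  assumes "N \<ge> 2"
    and "\<forall>k \<in> receivers M. rho k + psi k \<le> N"
    and "i \<in> receivers M" and "h \<in> receivers M"
    and "psi i > psi h" and "psi h \<ge> 1"
    and "rho i < rho h"
    and "j \<in> packets N" and "j' \<in> packets N"
  shows "expected_degree N M rho psi h j > expected_degree N M rho psi i j'"
proof -
  have "(\<Sum>k\<in>receivers M - {i}. expected_adj_count N rho psi i k)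
      < (\<Sum>k\<in>receivers M - {h}. expected_adj_count N rho psi h k)"
    using assms(1,3-5,7)
    by (intro sum_remove_swap_less expected_adj_count_swap_less expected_adj_count_mono)
       (auto simp: receivers_def)
  then show ?thesis
    using expected_degree_eq[OF assms(2,4,6,8)] expected_degree_eq[OF assms(2,3) _ assms(9)] assms(5,6)
    by simp
qed

end
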